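(* Let $\Omega\subset\mathbb{R}^2$ be open, $\lambda>0$, and let $u\in L^2(\Omega)$ satisfy $-\Delta u=\lambda u$ in $\Omega$. Let $\mathbf{x}_0\in\Omega$, $h>0$, $\alpha\in(0,1)$, and let $\mathbf{e}^-,\mathbf{e}^+$ be unit vectors with angle $\alpha\pi$ from $\mathbf{e}^-$ to $\mathbf{e}^+$; put $\Gamma^\pm=\{\mathbf{x}_0+t\mathbf{e}^\pm:0\le t\le h\}\subset\Omega$. Suppose $\Gamma^+$ is a generalized singular line of $u$ with constant parameter $\eta_2\equiv C_2$, and $\Gamma^-$ is a nodal line of $u$ ($u=0$ on $\Gamma^-$). Let $n\in\mathbb{N}$, $n\ge2$. If $\alpha\neq\frac{2q+1}{2p}$ for all integers $p,q$ with $1\le p\le n-1$ and $0\le q\le p-1$, then $u$ vanishes up to the order $n$ at $\mathbf{x}_0$, i.e. all partial derivatives of $u$ of order at most $n-1$ vanish at $\mathbf{x}_0$.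
   Context: No boundary condition is imposed on $\partial\Omega$; $u$ is real-analytic in $\Omega$. A line segment $\Gamma\subset\Omega$ is a generalized singular line with parameter $\eta$ (a complex-valued function not identically zero; here a nonzero complex constant) if $\partial_\nu u+\eta u=0$ on $\Gamma$, $\nu$ a unit normal to $\Gamma$. "Vanishes up to order $n$" means every homogeneous term of degree $<n$ in the Taylor expansion of $u$ at $\mathbf{x}_0$ vanishes. *)

theory Defs
  imports "HOL-Analysis.Analysis"
begin

definition dir_deriv :: "(real \<times> real) \<Rightarrow> (real \<times> real \<Rightarrow> complex) \<Rightarrow> (real \<times> real \<Rightarrow> complex)" where
  "dir_deriv v f = (\<lambda>x. vector_derivative (\<lambda>t. f (x + t *\<^sub>R v)) (at 0))"

definition dx :: "(real \<times> real \<Rightarrow> complex) \<Rightarrow> (real \<times> real \<Rightarrow> complex)" where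
  "dx = dir_deriv (1, 0)"

definition dy :: "(real \<times> real \<Rightarrow> complex) \<Rightarrow> (real \<times> real \<Rightarrow> complex)" where
  "dy = dir_deriv (0, 1)"

definition pderiv2 :: "nat \<Rightarrow> nat \<Rightarrow> (real \<times> real \<Rightarrow> complex) \<Rightarrow> (real \<times> real \<Rightarrow> complex)" where
  "pderiv2 i j f = (dx ^^ i) ((dy ^^ j) f)"

definition smooth_on2 :: "(real \<times> real) set \<Rightarrow> (real \<times> real \<Rightarrow> complex) \<Rightarrow> bool" where
  "smooth_on2 S f \<longleftrightarrow> (\<forall>i j. pderiv2 i j f differentiable_on S)"

definition laplacian :: "(real \<times> real \<Rightarrow> complex) \<Rightarrow> (real \<times> real \<Rightarrow> complex)" where
  "laplacian f = (\<lambda>x. dx (dx f) x + dy (dy f) x)"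

definition rot :: "real \<Rightarrow> real \<times> real \<Rightarrow> real \<times> real" where
  "rot \<theta> v = (cos \<theta> * fst v - sin \<theta> * snd v, sin \<theta> * fst v + cos \<theta> * snd v)"

definition gen_singular_line ::
  "(real \<times> real \<Rightarrow> complex) \<Rightarrow> (real \<times> real) set \<Rightarrow> (real \<times> real) \<Rightarrow> (real \<times> real \<Rightarrow> complex) \<Rightarrow> bool" where
  "gen_singular_line u \<Gamma> \<nu> \<eta> \<longleftrightarrow> (\<forall>x\<in>\<Gamma>. dir_deriv \<nu> u x + \<eta> x * u x = 0)"

definition nodal_line :: "(real \<times> real \<Rightarrow> complex) \<Rightarrow> (real \<times> real) set \<Rightarrow> bool" where
  "nodal_line u \<Gamma> \<longleftrightarrow> (\<forall>x\<in>\<Gamma>. u x = 0)"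

definition vanishes_up_to_order :: "(real \<times> real \<Rightarrow> complex) \<Rightarrow> real \<times> real \<Rightarrow> nat \<Rightarrow> bool" where
  "vanishes_up_to_order u x0 n \<longleftrightarrow> (\<forall>i j. i + j < n \<longrightarrow> pderiv2 i j u x0 = 0)"

end

theory Submission
  imports Defs "HOL-Computational_Algebra.Polynomial"
begin

(* Let K < n be an order such that all derivatives of u of order < K vanish at x0. By the
   Helmholtz equation the derivatives a_i = d_x^i d_y^(K-i) u (x0) then satisfy a_(i+2) = - a_i,
   so a_i = P i^i + Q (-i)^i: the Taylor term of order K is a combination of (y + i x)^K and
   (y - i x)^K. Consequently a K-th order derivative with symbol p evaluates to
   P p(i) + Q p(-i). The nodal line kills the K-th derivative along e^-, the singular line the
   derivative along nu followed by K - 1 derivatives along e^+ (its Robin term is of lower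
   order). As e^+ is e^- rotated by alpha pi, this linear system for (P, Q) has a determinant
   proportional to cos (K alpha pi), which is nonzero by the assumption on alpha. Hence
   P = Q = 0, and induction on K gives the theorem. *)

lemma dir_deriv_eq_derivative:
  assumes "(f has_derivative F) (at x)"
  shows "dir_deriv v f x = F v"
proof -
  have "((\<lambda>t. x + t *\<^sub>R v) has_derivative (\<lambda>t. t *\<^sub>R v)) (at 0)"
    by (auto intro!: derivative_eq_intros)
  moreover have "(f has_derivative F) (at (x + 0 *\<^sub>R v))" using assms by simp
  ultimately have "((\<lambda>t. f (x + t *\<^sub>R v)) has_derivative (\<lambda>t. F (t *\<^sub>R v))) (at 0)"
    using diff_chain_at by (fastforce simp: o_def)
  moreover have "linear F" using assms has_derivative_linear by blast
  ultimately have "((\<lambda>t. f (x + t *\<^sub>R v)) has_vector_derivative F v) (at 0)"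
    unfolding has_vector_derivative_def by (simp add: linear_scale)
  then show ?thesis unfolding dir_deriv_def by (rule vector_derivative_at)
qed

lemma has_vector_derivative_dir_deriv:
  assumes "f differentiable (at (x + s *\<^sub>R v))"
  shows "((\<lambda>s. f (x + s *\<^sub>R v)) has_vector_derivative dir_deriv v f (x + s *\<^sub>R v)) (at s)"
proof -
  obtain F where F: "(f has_derivative F) (at (x + s *\<^sub>R v))"
    using assms unfolding differentiable_def by blast
  have "((\<lambda>s. x + s *\<^sub>R v) has_derivative (\<lambda>t. t *\<^sub>R v)) (at s)"
    by (auto intro!: derivative_eq_intros)
  then have "((\<lambda>s. f (x + s *\<^sub>R v)) has_derivative (\<lambda>t. F (t *\<^sub>R v))) (at s)"
    using diff_chain_at F by (fastforce simp: o_def)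
  moreover have "linear F" using F has_derivative_linear by blast
  ultimately show ?thesis
    unfolding has_vector_derivative_def dir_deriv_eq_derivative[OF F] by (simp add: linear_scale)
qed

lemma dir_deriv_eq_partials:
  assumes "f differentiable (at x)"
  shows "dir_deriv v f x = of_real (fst v) * dx f x + of_real (snd v) * dy f x"
proof -
  obtain F where F: "(f has_derivative F) (at x)" using assms unfolding differentiable_def by blast
  have "linear F" using F has_derivative_linear by blast
  moreover have "v = fst v *\<^sub>R (1,0) + snd v *\<^sub>R (0,1)" by (cases v) auto
  ultimately have "F v = fst v *\<^sub>R F (1,0) + snd v *\<^sub>R F (0,1)"
    by (metis linear_add linear_scale)
  then show ?thesis
    unfolding dx_def dy_def dir_deriv_eq_derivative[OF F] by (simp add: scaleR_conv_of_real)
qed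

lemma dir_deriv_cong_open:
  assumes "open S" "x \<in> S" "\<And>y. y \<in> S \<Longrightarrow> f y = g y"
  shows "dir_deriv v f x = dir_deriv v g x"
proof -
  have "open ((\<lambda>t::real. x + t *\<^sub>R v) -` S)"
    using assms(1) by (intro continuous_open_vimage) (auto intro!: continuous_intros)
  then have "\<forall>\<^sub>F t in nhds 0. x + t *\<^sub>R v \<in> S"
    using eventually_nhds_in_open[of _ 0] assms(2) by fastforce
  then have "\<forall>\<^sub>F t in nhds 0. t \<in> UNIV \<longrightarrow> f (x + t *\<^sub>R v) = g (x + t *\<^sub>R v)"
    by eventually_elim (simp add: assms(3))
  then show ?thesis
    unfolding dir_deriv_def by (rule vector_derivative_cong_eq) auto
qed

lemma dir_deriv_sum:
  assumes "finite I" "\<And>i. i \<in> I \<Longrightarrow> f i differentiable (at x)"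
  shows "dir_deriv v (\<lambda>y. \<Sum>i\<in>I. c i * f i y) x = (\<Sum>i\<in>I. c i * dir_deriv v (f i) x)"
proof -
  have F: "(f i has_derivative frechet_derivative (f i) (at x)) (at x)" if "i \<in> I" for i
    using assms(2) that frechet_derivative_works by blast
  then have "((\<lambda>y. \<Sum>i\<in>I. c i * f i y) has_derivative
              (\<lambda>h. \<Sum>i\<in>I. c i * frechet_derivative (f i) (at x) h)) (at x)"
    by (intro has_derivative_sum has_derivative_mult_right)
  then show ?thesis
    by (simp add: dir_deriv_eq_derivative dir_deriv_eq_derivative[OF F])
qed

lemma dir_deriv_add_mult:
  assumes "f differentiable (at x)" "g differentiable (at x)"
  shows "dir_deriv v (\<lambda>y. f y + c * g y) x = dir_deriv v f x + c * dir_deriv v g x"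
proof -
  obtain F G where F: "(f has_derivative F) (at x)" and G: "(g has_derivative G) (at x)"
    using assms unfolding differentiable_def by blast
  have "((\<lambda>y. f y + c * g y) has_derivative (\<lambda>h. F h + c * G h)) (at x)"
    using F G by (intro has_derivative_add has_derivative_mult_right)
  then show ?thesis
    by (simp add: dir_deriv_eq_derivative dir_deriv_eq_derivative[OF F] dir_deriv_eq_derivative[OF G])
qed

lemma funpow_dir_deriv_zero: "(dir_deriv v ^^ k) (\<lambda>_. 0) = (\<lambda>_. 0)"
  by (induction k) (simp_all add: dir_deriv_eq_derivative[OF has_derivative_const])

definition second_difference ::
    "('a::real_vector \<Rightarrow> 'b::ab_group_add) \<Rightarrow> 'a \<Rightarrow> 'a \<Rightarrow> 'a \<Rightarrow> real \<Rightarrow> 'b"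
  where "second_difference f p v w h = f (p + h *\<^sub>R v + h *\<^sub>R w) - f (p + h *\<^sub>R v) - f (p + h *\<^sub>R w) + f p"

lemma second_difference_commute: "second_difference f p v w h = second_difference f p w v h"
  unfolding second_difference_def by (simp add: diff_diff_eq add_ac)

(* Linearise s \<mapsto> f (p + h w + s v) - f (p + s v) on [0, h]: its derivative is controlled by
   the Frechet expansion of the directional derivative d_v f at p. *)
lemma second_difference_bound:
  assumes h: "h > 0" and e: "e \<ge> 0" and lin: "linear L"
    and near: "\<And>s t. s \<in> {0..h} \<Longrightarrow> t \<in> {0..h} \<Longrightarrow>
      f differentiable (at (p + (s *\<^sub>R v + t *\<^sub>R w))) \<and>
      cmod (dir_deriv v f (p + (s *\<^sub>R v + t *\<^sub>R w)) - dir_deriv v f p - L (s *\<^sub>R v + t *\<^sub>R w))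
        \<le> e * norm (s *\<^sub>R v + t *\<^sub>R w)"
  shows "cmod (second_difference f p v w h - of_real (h\<^sup>2) * L w) \<le> 3 * e * (norm v + norm w) * h\<^sup>2"
proof -
  define D where "D = dir_deriv v f"
  define E where "E y = D (p + y) - D p - L y" for y
  define c where "c = norm v + norm w"
  have E_le: "cmod (E (s *\<^sub>R v + t *\<^sub>R w)) \<le> e * (s * norm v + t * norm w)"
    if "s \<in> {0..h}" "t \<in> {0..h}" for s t
  proof -
    have "cmod (E (s *\<^sub>R v + t *\<^sub>R w)) \<le> e * norm (s *\<^sub>R v + t *\<^sub>R w)"
      using near[OF that] unfolding E_def D_def by blast
    also have "\<dots> \<le> e * (s * norm v + t * norm w)"
      using that e norm_triangle_ineq[of "s *\<^sub>R v" "t *\<^sub>R w"] by (intro mult_left_mono) auto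
    finally show ?thesis .
  qed
  define g where "g s = f (p + h *\<^sub>R w + s *\<^sub>R v) - f (p + s *\<^sub>R v)" for s
  define G where "G s = D (p + h *\<^sub>R w + s *\<^sub>R v) - D (p + s *\<^sub>R v)" for s
  have "(g has_vector_derivative G s) (at s within {0..h})" if "s \<in> {0..h}" for s
  proof -
    have "f differentiable (at (p + h *\<^sub>R w + s *\<^sub>R v))" "f differentiable (at (p + s *\<^sub>R v))"
      using near[OF that, of h] near[OF that, of 0] h by (simp_all add: algebra_simps)
    then show ?thesis unfolding g_def G_def D_def
      by (intro has_vector_derivative_at_within[OF has_vector_derivative_diff]
          has_vector_derivative_dir_deriv)
  qed
  moreover have "norm (G s - G 0) \<le> 2 * e * c * h" if s: "s \<in> {0..h}" for s
  proof -
    have "G s - G 0 = E (s *\<^sub>R v + h *\<^sub>R w) - E (s *\<^sub>R v + 0 *\<^sub>R w) - E (0 *\<^sub>R v + h *\<^sub>R w)"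
      unfolding G_def E_def using linear_add[OF lin, of "s *\<^sub>R v" "h *\<^sub>R w"]
      by (simp add: algebra_simps)
    also have "norm \<dots> \<le> cmod (E (s *\<^sub>R v + h *\<^sub>R w)) + cmod (E (s *\<^sub>R v + 0 *\<^sub>R w))
                           + cmod (E (0 *\<^sub>R v + h *\<^sub>R w))"
      by (smt (verit) norm_triangle_ineq4)
    also have "\<dots> \<le> e * (s * norm v + h * norm w) + e * (s * norm v + 0 * norm w)
                   + e * (0 * norm v + h * norm w)"
      using E_le[OF s, of h] E_le[OF s, of 0] E_le[of 0 h] h by (intro add_mono) auto
    also have "\<dots> \<le> 2 * e * c * h"
      using s e unfolding c_def by (simp add: algebra_simps mult_left_mono mult_right_mono)
    finally show ?thesis .
  qed
  ultimately have "norm (g h - g 0 - (h - 0) *\<^sub>R G 0) \<le> norm (h - 0) * (2 * e * c * h)"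
    using h by (intro vector_differentiable_bound_linearization[where S = "{0..h}"])
      (auto simp: closed_segment_eq_real_ivl)
  then have 1: "norm (g h - g 0 - h *\<^sub>R G 0) \<le> 2 * e * c * h\<^sup>2"
    using h by (simp add: power2_eq_square mult_ac)
  have "h *\<^sub>R G 0 - of_real (h\<^sup>2) * L w = of_real h * E (0 *\<^sub>R v + h *\<^sub>R w)"
    unfolding G_def E_def using linear_scale[OF lin, of h w]
    by (simp add: scaleR_conv_of_real power2_eq_square algebra_simps)
  then have "norm (h *\<^sub>R G 0 - of_real (h\<^sup>2) * L w) = h * cmod (E (0 *\<^sub>R v + h *\<^sub>R w))"
    using h by (simp add: norm_mult)
  also have "\<dots> \<le> h * (e * (0 * norm v + h * norm w))"
    using E_le[of 0 h] h by (intro mult_left_mono) auto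
  also have "\<dots> \<le> e * c * h\<^sup>2"
    using mult_nonneg_nonneg[of "e * h * h" "norm v"] e h
    by (simp add: c_def power2_eq_square algebra_simps)
  finally have 2: "norm (h *\<^sub>R G 0 - of_real (h\<^sup>2) * L w) \<le> e * c * h\<^sup>2" .
  have "g h - g 0 = second_difference f p v w h"
    unfolding g_def second_difference_def by (simp add: add_ac)
  with norm_diff_triangle_le[OF 1 2] show ?thesis unfolding c_def by (simp add: algebra_simps)
qed

lemma second_difference_quotient_tendsto:
  assumes S: "open S" "p \<in> S" and f: "\<And>x. x \<in> S \<Longrightarrow> f differentiable (at x)"
    and L: "(dir_deriv v f has_derivative L) (at p)"
  shows "((\<lambda>h. second_difference f p v w h / of_real (h\<^sup>2)) \<longlongrightarrow> L w) (at_right 0)"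
proof (rule tendstoI)
  fix \<epsilon> :: real assume "\<epsilon> > 0"
  define c where "c = norm v + norm w"
  have c: "c \<ge> 0" unfolding c_def by simp
  define e where "e = \<epsilon> / (3 * c + 1)"
  have e: "e > 0" "3 * e * c < \<epsilon>"
    using \<open>\<epsilon> > 0\<close> c unfolding e_def by (simp_all add: field_simps)
  obtain d1 where d1: "d1 > 0" "\<And>y. norm (y - p) < d1 \<Longrightarrow>
      cmod (dir_deriv v f y - dir_deriv v f p - L (y - p)) \<le> e * norm (y - p)"
    using L e(1) unfolding has_derivative_at_alt by metis
  obtain r where r: "r > 0" "ball p r \<subseteq> S" using S open_contains_ball by blast
  define d where "d = min d1 r / (c + 1)"
  have d: "d > 0" unfolding d_def using d1 r c by simp
  show "\<forall>\<^sub>F h in at_right 0. dist (second_difference f p v w h / of_real (h\<^sup>2)) (L w) < \<epsilon>"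
    using eventually_at_right_real[OF d]
  proof eventually_elim
    case (elim h)
    then have h: "0 < h" "h < d" by auto
    have "h * c \<le> h * (c + 1)" using h by simp
    also have "\<dots> < min d1 r" using h c unfolding d_def by (simp add: pos_less_divide_eq)
    finally have hc: "h * c < min d1 r" .
    have "f differentiable (at (p + (s *\<^sub>R v + t *\<^sub>R w))) \<and>
          cmod (dir_deriv v f (p + (s *\<^sub>R v + t *\<^sub>R w)) - dir_deriv v f p - L (s *\<^sub>R v + t *\<^sub>R w))
            \<le> e * norm (s *\<^sub>R v + t *\<^sub>R w)" if "s \<in> {0..h}" "t \<in> {0..h}" for s t
    proof -
      have "norm (s *\<^sub>R v + t *\<^sub>R w) \<le> s * norm v + t * norm w"
        using that norm_triangle_ineq[of "s *\<^sub>R v" "t *\<^sub>R w"] by simp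
      also have "\<dots> \<le> h * c"
        unfolding c_def distrib_left using that by (intro add_mono mult_right_mono) auto
      finally have small: "norm (s *\<^sub>R v + t *\<^sub>R w) < min d1 r" using hc by linarith
      then have "p + (s *\<^sub>R v + t *\<^sub>R w) \<in> ball p r" by (simp add: dist_norm norm_minus_commute add.commute)
      with r have "p + (s *\<^sub>R v + t *\<^sub>R w) \<in> S" by blast
      then show ?thesis using f d1(2)[of "p + (s *\<^sub>R v + t *\<^sub>R w)"] small by simp
    qed
    then have "cmod (second_difference f p v w h - of_real (h\<^sup>2) * L w) \<le> 3 * e * c * h\<^sup>2"
      unfolding c_def using h e has_derivative_linear[OF L] by (intro second_difference_bound) auto
    moreover have "second_difference f p v w h / of_real (h\<^sup>2) - L w
                     = (second_difference f p v w h - of_real (h\<^sup>2) * L w) / of_real (h\<^sup>2)"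
      using h by (simp add: diff_divide_distrib)
    ultimately have "dist (second_difference f p v w h / of_real (h\<^sup>2)) (L w) \<le> 3 * e * c"
      using h by (simp add: dist_norm norm_divide norm_power divide_le_eq)
    then show ?case using e(2) by linarith
  qed
qed

lemma dir_deriv_commute:
  assumes "open S" "p \<in> S" "\<And>x. x \<in> S \<Longrightarrow> f differentiable (at x)"
    and "dir_deriv v f differentiable (at p)" "dir_deriv w f differentiable (at p)"
  shows "dir_deriv w (dir_deriv v f) p = dir_deriv v (dir_deriv w f) p"
proof -
  obtain Lv Lw where Lv: "(dir_deriv v f has_derivative Lv) (at p)"
    and Lw: "(dir_deriv w f has_derivative Lw) (at p)"
    using assms(4,5) unfolding differentiable_def by blast
  have "Lv w = Lw v"
  proof (rule tendsto_unique)
    show "((\<lambda>h. second_difference f p v w h / of_real (h\<^sup>2)) \<longlongrightarrow> Lv w) (at_right 0)"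
      by (rule second_difference_quotient_tendsto[OF assms(1-3) Lv])
    show "((\<lambda>h. second_difference f p v w h / of_real (h\<^sup>2)) \<longlongrightarrow> Lw v) (at_right 0)"
      using second_difference_quotient_tendsto[OF assms(1-3) Lw, of v]
      by (simp add: second_difference_commute)
  qed simp
  then show ?thesis by (simp add: dir_deriv_eq_derivative[OF Lv] dir_deriv_eq_derivative[OF Lw])
qed

lemma differentiable_on_cong_open:
  fixes f g :: "'a::real_normed_vector \<Rightarrow> 'b::real_normed_vector"
  assumes "open S" "\<And>x. x \<in> S \<Longrightarrow> f x = g x" "g differentiable_on S"
  shows "f differentiable_on S"
proof -
  have "f differentiable (at x)" if x: "x \<in> S" for x
  proof -
    obtain G where "(g has_derivative G) (at x)"
      using assms(1,3) x by (auto simp: differentiable_on_eq_differentiable_at differentiable_def)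
    then have "(f has_derivative G) (at x)"
      by (rule has_derivative_transform_within_open[OF _ assms(1) x]) (simp add: assms(2))
    then show ?thesis unfolding differentiable_def by blast
  qed
  then show ?thesis using assms(1) by (simp add: differentiable_on_eq_differentiable_at)
qed

lemma smooth_on2_imp_differentiable:
  assumes "open S" "smooth_on2 S u" "x \<in> S"
  shows "pderiv2 i j u differentiable (at x)"
  using assms unfolding smooth_on2_def by (simp add: differentiable_on_eq_differentiable_at)

lemma pderiv2_0_0 [simp]: "pderiv2 0 0 f = f"
  by (simp add: pderiv2_def)

lemma pderiv2_Suc_left: "pderiv2 (Suc i) j f = dx (pderiv2 i j f)"
  by (simp add: pderiv2_def)

lemma funpow_dir_deriv_cong_open:
  assumes "open S" "\<And>y. y \<in> S \<Longrightarrow> f y = g y" "x \<in> S"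
  shows "(dir_deriv v ^^ k) f x = (dir_deriv v ^^ k) g x"
  using assms(3)
proof (induction k arbitrary: x)
  case (Suc k)
  then show ?case using dir_deriv_cong_open[OF assms(1) Suc.prems Suc.IH] by simp
qed (use assms(2) in simp)

lemma dy_pderiv2:
  assumes S: "open S" and sm: "smooth_on2 S u" and x: "x \<in> S"
  shows "dy (pderiv2 i j u) x = pderiv2 i (Suc j) u x"
  using x
proof (induction i arbitrary: x)
  case 0
  then show ?case by (simp add: pderiv2_def)
next
  case (Suc i)
  let ?g = "pderiv2 i j u"
  have D: "pderiv2 i (Suc j) u differentiable_on S"
    using sm unfolding smooth_on2_def by blast
  have "dy ?g differentiable_on S"
    by (rule differentiable_on_cong_open[OF S _ D]) (rule Suc.IH)
  then have "dy ?g differentiable (at x)"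
    using S Suc.prems by (simp add: differentiable_on_eq_differentiable_at)
  moreover have "dx ?g differentiable (at x)"
    using smooth_on2_imp_differentiable[OF S sm Suc.prems, of "Suc i" j]
    by (simp add: pderiv2_Suc_left)
  ultimately have "dy (dx ?g) x = dx (dy ?g) x"
    unfolding dx_def dy_def
    by (intro dir_deriv_commute[OF S Suc.prems] smooth_on2_imp_differentiable[OF S sm])
  also have "\<dots> = dx (pderiv2 i (Suc j) u) x"
    unfolding dx_def by (rule dir_deriv_cong_open[OF S Suc.prems Suc.IH])
  finally show ?case by (simp add: pderiv2_Suc_left)
qed

lemma pderiv2_pderiv2:
  assumes S: "open S" and sm: "smooth_on2 S u" and x: "x \<in> S"
  shows "pderiv2 i j (pderiv2 k l u) x = pderiv2 (i + k) (j + l) u x"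
proof -
  have dy_iter: "(dy ^^ j) (pderiv2 k l u) y = pderiv2 k (j + l) u y" if "y \<in> S" for y
    using that
  proof (induction j arbitrary: y)
    case (Suc j)
    have "(dy ^^ Suc j) (pderiv2 k l u) y = dy (pderiv2 k (j + l) u) y"
      unfolding funpow.simps o_apply dy_def
      by (rule dir_deriv_cong_open[OF S Suc.prems Suc.IH[unfolded dy_def]])
    then show ?case using dy_pderiv2[OF S sm Suc.prems] by simp
  qed simp
  have "pderiv2 i j (pderiv2 k l u) x = (dx ^^ i) (pderiv2 k (j + l) u) x"
    unfolding pderiv2_def[of i j] dx_def by (rule funpow_dir_deriv_cong_open[OF S dy_iter x])
  then show ?thesis by (simp add: pderiv2_def funpow_add)
qed

lemma smooth_on2_pderiv2:
  assumes "open S" "smooth_on2 S u"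
  shows "smooth_on2 S (pderiv2 k l u)"
  unfolding smooth_on2_def
proof (intro allI)
  fix i j
  have D: "pderiv2 (i + k) (j + l) u differentiable_on S"
    using assms(2) unfolding smooth_on2_def by blast
  show "pderiv2 i j (pderiv2 k l u) differentiable_on S"
    by (rule differentiable_on_cong_open[OF assms(1) _ D]) (rule pderiv2_pderiv2[OF assms])
qed

lemma funpow_dir_deriv_add_mult:
  assumes S: "open S" and H: "\<And>y. y \<in> S \<Longrightarrow> H y = f y + c * g y"
    and df: "\<And>k y. y \<in> S \<Longrightarrow> (dir_deriv v ^^ k) f differentiable (at y)"
    and dg: "\<And>k y. y \<in> S \<Longrightarrow> (dir_deriv v ^^ k) g differentiable (at y)"
    and x: "x \<in> S"
  shows "(dir_deriv v ^^ k) H x = (dir_deriv v ^^ k) f x + c * (dir_deriv v ^^ k) g x"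
  using x
proof (induction k arbitrary: x)
  case (Suc k)
  have "(dir_deriv v ^^ Suc k) H x
          = dir_deriv v (\<lambda>y. (dir_deriv v ^^ k) f y + c * (dir_deriv v ^^ k) g y) x"
    unfolding funpow.simps o_apply by (rule dir_deriv_cong_open[OF S Suc.prems Suc.IH])
  also have "\<dots> = (dir_deriv v ^^ Suc k) f x + c * (dir_deriv v ^^ Suc k) g x"
    using dir_deriv_add_mult[OF df[OF Suc.prems] dg[OF Suc.prems]] by simp
  finally show ?case .
qed (use H in simp)

lemma pderiv2_add_mult:
  assumes S: "open S" and sf: "smooth_on2 S f" and sg: "smooth_on2 S g"
    and H: "\<And>y. y \<in> S \<Longrightarrow> H y = f y + c * g y" and x: "x \<in> S"
  shows "pderiv2 i j H x = pderiv2 i j f x + c * pderiv2 i j g x"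
proof -
  have dy_diff: "(dir_deriv (0, 1) ^^ k) F differentiable (at y)"
    if "smooth_on2 S F" "y \<in> S" for F k y
    using smooth_on2_imp_differentiable[OF S that, of 0 k] by (simp add: pderiv2_def dy_def)
  have dx_diff: "(dir_deriv (1, 0) ^^ k) ((dy ^^ j) F) differentiable (at y)"
    if "smooth_on2 S F" "y \<in> S" for F k y
    using smooth_on2_imp_differentiable[OF S that, of k j] by (simp add: pderiv2_def dx_def)
  have "(dy ^^ j) H y = (dy ^^ j) f y + c * (dy ^^ j) g y" if "y \<in> S" for y
    unfolding dy_def using dy_diff sf sg by (intro funpow_dir_deriv_add_mult[OF S H _ _ that])
  then show ?thesis
    unfolding pderiv2_def dx_def using dx_diff sf sg by (intro funpow_dir_deriv_add_mult[OF S _ _ _ x])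
qed

lemma helmholtz_pderiv2:
  assumes S: "open S" and sm: "smooth_on2 S u"
    and helmholtz: "\<forall>x\<in>S. - laplacian u x = complex_of_real lam * u x" and x: "x \<in> S"
  shows "pderiv2 (i + 2) j u x + pderiv2 i (j + 2) u x + of_real lam * pderiv2 i j u x = 0"
proof -
  define W where "W y = pderiv2 0 2 u y + of_real lam * u y" for y
  have W_eq: "pderiv2 i j W y = pderiv2 i j (pderiv2 0 2 u) y + of_real lam * pderiv2 i j u y"
    if "y \<in> S" for i j y
    by (rule pderiv2_add_mult[OF S smooth_on2_pderiv2[OF S sm] sm _ that]) (simp add: W_def)
  have W: "smooth_on2 S W"
    unfolding smooth_on2_def
  proof (intro allI)
    fix i j
    have D: "(\<lambda>y. pderiv2 i j (pderiv2 0 2 u) y + of_real lam * pderiv2 i j u y) differentiable_on S"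
      using smooth_on2_pderiv2[OF S sm, of 0 2] sm unfolding smooth_on2_def
      by (intro differentiable_on_add differentiable_on_mult differentiable_on_const) auto
    show "pderiv2 i j W differentiable_on S" by (rule differentiable_on_cong_open[OF S _ D]) (rule W_eq)
  qed
  have zero: "0 = pderiv2 2 0 u y + 1 * W y" if "y \<in> S" for y
  proof -
    have "of_real lam * u y = - laplacian u y" using helmholtz that by simp
    then show ?thesis by (simp add: W_def laplacian_def pderiv2_def numeral_2_eq_2)
  qed
  have "pderiv2 i j (\<lambda>_. 0) x = pderiv2 i j (pderiv2 2 0 u) x + 1 * pderiv2 i j W x"
    by (rule pderiv2_add_mult[OF S smooth_on2_pderiv2[OF S sm] W zero x])
  then show ?thesis
    by (simp add: W_eq[OF x] pderiv2_pderiv2[OF S sm x] pderiv2_def[of _ _ "\<lambda>_. 0"] dx_def dy_def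
        funpow_dir_deriv_zero add.assoc)
qed

(* The homogeneous operator of order m with symbol p, dehomogenised by d_x \<mapsto> z, d_y \<mapsto> 1. *)
definition homog_deriv ::
    "nat \<Rightarrow> complex poly \<Rightarrow> (real \<times> real \<Rightarrow> complex) \<Rightarrow> real \<times> real \<Rightarrow> complex"
  where "homog_deriv m p u x = (\<Sum>i\<le>m. coeff p i * pderiv2 i (m - i) u x)"

definition dir_symbol :: "real \<times> real \<Rightarrow> complex poly"
  where "dir_symbol v = [:complex_of_real (snd v), complex_of_real (fst v):]"

lemma homog_deriv_0_1 [simp]: "homog_deriv 0 1 u = u"
  by (simp add: homog_deriv_def fun_eq_iff)

lemma degree_dir_symbol: "degree (dir_symbol v) \<le> 1"
  unfolding dir_symbol_def by (rule order_trans[OF degree_pCons_le]) simp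

lemma degree_mult_dir_symbol_power: "degree (p * dir_symbol v ^ k) \<le> degree p + k"
proof -
  have "degree (dir_symbol v ^ k) \<le> degree (dir_symbol v) * k" by (rule degree_power_le)
  also have "\<dots> \<le> k" using degree_dir_symbol[of v] by simp
  finally have "degree (dir_symbol v ^ k) \<le> k" .
  then show ?thesis using degree_mult_le[of p "dir_symbol v ^ k"] by linarith
qed

lemma homog_deriv_differentiable_on:
  assumes "open S" "smooth_on2 S u"
  shows "homog_deriv m p u differentiable_on S"
  unfolding differentiable_on_eq_differentiable_at[OF assms(1)] homog_deriv_def[abs_def]
  using smooth_on2_imp_differentiable[OF assms] by simp

lemma dir_deriv_homog_deriv:
  assumes S: "open S" and sm: "smooth_on2 S u" and x: "x \<in> S" and p: "degree p \<le> m"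
  shows "dir_deriv v (homog_deriv m p u) x = homog_deriv (Suc m) (p * dir_symbol v) u x"
proof -
  let ?a = "complex_of_real (fst v)" and ?b = "complex_of_real (snd v)"
  let ?d = "\<lambda>i j. pderiv2 i j u x"
  have "dir_deriv v (homog_deriv m p u) x = (\<Sum>i\<le>m. coeff p i * dir_deriv v (pderiv2 i (m - i) u) x)"
    unfolding homog_deriv_def[abs_def]
    by (rule dir_deriv_sum) (auto intro: smooth_on2_imp_differentiable[OF S sm x])
  also have "\<dots> = (\<Sum>i\<le>m. coeff p i * (?a * ?d (Suc i) (m - i) + ?b * ?d i (Suc (m - i))))"
    by (intro sum.cong refl)
      (simp add: dir_deriv_eq_partials[OF smooth_on2_imp_differentiable[OF S sm x]]
        pderiv2_Suc_left dy_pderiv2[OF S sm x])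
  also have "\<dots> = (\<Sum>i\<le>m. ?b * coeff p i * ?d i (Suc (m - i)))
                   + (\<Sum>i\<le>m. ?a * coeff p i * ?d (Suc i) (m - i))"
    by (simp add: sum.distrib algebra_simps)
  also have "\<dots> = homog_deriv (Suc m) (p * dir_symbol v) u x"
  proof -
    have "p * dir_symbol v = smult ?b p + pCons 0 (smult ?a p)"
      by (simp add: dir_symbol_def mult_pCons_right)
    then have "homog_deriv (Suc m) (p * dir_symbol v) u x
        = (\<Sum>i\<le>Suc m. ?b * coeff p i * ?d i (Suc m - i))
          + (\<Sum>i\<le>Suc m. coeff (pCons 0 (smult ?a p)) i * ?d i (Suc m - i))"
      unfolding homog_deriv_def by (simp add: sum.distrib algebra_simps)
    also have "(\<Sum>i\<le>Suc m. ?b * coeff p i * ?d i (Suc m - i))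
                 = (\<Sum>i\<le>m. ?b * coeff p i * ?d i (Suc (m - i)))"
      using p by (simp add: coeff_eq_0 Suc_diff_le)
    also have "(\<Sum>i\<le>Suc m. coeff (pCons 0 (smult ?a p)) i * ?d i (Suc m - i))
                 = (\<Sum>i\<le>m. ?a * coeff p i * ?d (Suc i) (m - i))"
      by (subst sum.atMost_Suc_shift) simp
    finally show ?thesis by simp
  qed
  finally show ?thesis .
qed

lemma funpow_dir_deriv_homog_deriv:
  assumes S: "open S" and sm: "smooth_on2 S u" and f: "\<And>y. y \<in> S \<Longrightarrow> f y = homog_deriv m p u y"
    and p: "degree p \<le> m" and x: "x \<in> S"
  shows "(dir_deriv v ^^ k) f x = homog_deriv (m + k) (p * dir_symbol v ^ k) u x"
  using x
proof (induction k arbitrary: x)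
  case (Suc k)
  have "(dir_deriv v ^^ Suc k) f x = dir_deriv v (homog_deriv (m + k) (p * dir_symbol v ^ k) u) x"
    unfolding funpow.simps o_apply by (rule dir_deriv_cong_open[OF S Suc.prems Suc.IH])
  also have "\<dots> = homog_deriv (Suc (m + k)) (p * dir_symbol v ^ k * dir_symbol v) u x"
    by (rule dir_deriv_homog_deriv[OF S sm Suc.prems order_trans[OF degree_mult_dir_symbol_power]])
      (use p in simp)
  also have "\<dots> = homog_deriv (m + Suc k) (p * dir_symbol v ^ Suc k) u x"
    by (simp only: power_Suc2 mult.assoc add_Suc_right)
  finally show ?case .
qed (use f in simp)

lemma funpow_dir_deriv_homog_deriv_differentiable:
  assumes S: "open S" and sm: "smooth_on2 S u" and f: "\<And>y. y \<in> S \<Longrightarrow> f y = homog_deriv m p u y"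
    and p: "degree p \<le> m" and x: "x \<in> S"
  shows "(dir_deriv v ^^ k) f differentiable (at x)"
proof -
  have "(dir_deriv v ^^ k) f differentiable_on S"
    by (rule differentiable_on_cong_open[OF S _ homog_deriv_differentiable_on[OF S sm]])
      (rule funpow_dir_deriv_homog_deriv[OF S sm f p])
  then show ?thesis using S x by (simp add: differentiable_on_eq_differentiable_at)
qed

lemma homog_deriv_eq_0:
  assumes "\<And>i j. i + j < K \<Longrightarrow> pderiv2 i j u x = 0" "m < K"
  shows "homog_deriv m p u x = 0"
  unfolding homog_deriv_def using assms by (intro sum.neutral) auto

lemma dir_deriv_eq_0_if_vanishing_ahead:
  assumes "F differentiable (at y)" "c > 0" "\<And>s. s \<in> {0..c} \<Longrightarrow> F (y + s *\<^sub>R e) = 0"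
  shows "dir_deriv e F y = 0"
proof -
  have "((\<lambda>s. F (y + s *\<^sub>R e)) has_vector_derivative dir_deriv e F y) (at 0)"
    using has_vector_derivative_dir_deriv[of F y 0 e] assms(1) by simp
  then have "((\<lambda>s. F (y + s *\<^sub>R e)) has_vector_derivative dir_deriv e F y) (at 0 within {0..c})"
    by (rule has_vector_derivative_at_within)
  moreover have "((\<lambda>s. F (y + s *\<^sub>R e)) has_vector_derivative 0) (at 0 within {0..c})"
    by (rule has_vector_derivative_transform[OF _ _ has_vector_derivative_const]) (use assms(2,3) in auto)
  moreover have "at (0::real) within {0..c} \<noteq> bot"
    using assms(2) by (simp add: at_within_Icc_at_right)
  ultimately show ?thesis using vector_derivative_unique_within by blast
qed

lemma funpow_dir_deriv_eq_0_on_segment: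
  assumes h: "h > 0" and F: "\<And>t. t \<in> {0..h} \<Longrightarrow> F (x0 + t *\<^sub>R e) = 0"
    and D: "\<And>k t. t \<in> {0..<h} \<Longrightarrow> (dir_deriv e ^^ k) F differentiable (at (x0 + t *\<^sub>R e))"
  shows "(dir_deriv e ^^ k) F x0 = 0"
proof -
  have "(dir_deriv e ^^ k) F (x0 + t *\<^sub>R e) = 0" if "t \<in> {0..<h}" for t
    using that
  proof (induction k arbitrary: t)
    case (Suc k)
    have "dir_deriv e ((dir_deriv e ^^ k) F) (x0 + t *\<^sub>R e) = 0"
    proof (rule dir_deriv_eq_0_if_vanishing_ahead[OF D[OF Suc.prems]])
      show "(h - t) / 2 > 0" using Suc.prems by simp
      fix s assume "s \<in> {0..(h - t) / 2}"
      then have "t + s \<in> {0..<h}" using Suc.prems by auto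
      then show "(dir_deriv e ^^ k) F (x0 + t *\<^sub>R e + s *\<^sub>R e) = 0"
        using Suc.IH[of "t + s"] by (simp add: scaleR_add_left add.assoc)
    qed
    then show ?case by simp
  qed (use F in auto)
  from this[of 0] show ?thesis using h by simp
qed

lemma add_scaleR_mem_closed_segment:
  assumes "h > 0" "t \<in> {0..h}"
  shows "x0 + t *\<^sub>R e \<in> closed_segment x0 (x0 + h *\<^sub>R e)"
proof -
  have "x0 + t *\<^sub>R e = (1 - t / h) *\<^sub>R x0 + (t / h) *\<^sub>R (x0 + h *\<^sub>R e)"
    using assms(1) by (simp add: algebra_simps)
  then show ?thesis using assms unfolding in_segment by (intro exI[of _ "t / h"]) auto
qed

lemma nodal_line_homog_derivs:
  assumes S: "open S" and sm: "smooth_on2 S u" and h: "h > 0"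
    and seg: "closed_segment x0 (x0 + h *\<^sub>R e) \<subseteq> S"
    and nodal: "nodal_line u (closed_segment x0 (x0 + h *\<^sub>R e))"
  shows "homog_deriv k (dir_symbol e ^ k) u x0 = 0"
proof -
  have x0: "x0 \<in> S" using seg by auto
  have u: "u y = homog_deriv 0 1 u y" if "y \<in> S" for y by simp
  have "(dir_deriv e ^^ k) u x0 = 0"
  proof (rule funpow_dir_deriv_eq_0_on_segment[OF h])
    show "u (x0 + t *\<^sub>R e) = 0" if "t \<in> {0..h}" for t
      using nodal add_scaleR_mem_closed_segment[OF h that] unfolding nodal_line_def by blast
    show "(dir_deriv e ^^ k) u differentiable (at (x0 + t *\<^sub>R e))" if "t \<in> {0..<h}" for k t
      using add_scaleR_mem_closed_segment[OF h, of t] that seg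
      by (intro funpow_dir_deriv_homog_deriv_differentiable[OF S sm u]) auto
  qed
  then show ?thesis
    using funpow_dir_deriv_homog_deriv[OF S sm u _ x0, where v = e and k = k] by simp
qed

lemma singular_line_homog_derivs:
  assumes S: "open S" and sm: "smooth_on2 S u" and h: "h > 0"
    and seg: "closed_segment x0 (x0 + h *\<^sub>R e) \<subseteq> S"
    and singular: "gen_singular_line u (closed_segment x0 (x0 + h *\<^sub>R e)) \<nu> (\<lambda>_. C)"
  shows "homog_deriv (Suc k) (dir_symbol \<nu> * dir_symbol e ^ k) u x0
           + C * homog_deriv k (dir_symbol e ^ k) u x0 = 0"
proof -
  have x0: "x0 \<in> S" using seg by auto
  define F where "F y = dir_deriv \<nu> u y + C * u y" for y
  have u: "u y = homog_deriv 0 1 u y" if "y \<in> S" for y by simp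
  have du: "dir_deriv \<nu> u y = homog_deriv 1 (dir_symbol \<nu>) u y" if "y \<in> S" for y
    using dir_deriv_homog_deriv[OF S sm that, of 1 0 \<nu>] by simp
  have "(dir_deriv e ^^ k) F y = homog_deriv (Suc k) (dir_symbol \<nu> * dir_symbol e ^ k) u y
                                  + C * homog_deriv k (dir_symbol e ^ k) u y"
    if "y \<in> S" for k y
  proof -
    have "(dir_deriv e ^^ k) F y = (dir_deriv e ^^ k) (dir_deriv \<nu> u) y + C * (dir_deriv e ^^ k) u y"
    proof (rule funpow_dir_deriv_add_mult[OF S _ _ _ that])
      show "(dir_deriv e ^^ k) (dir_deriv \<nu> u) differentiable (at z)" if "z \<in> S" for k z
        by (rule funpow_dir_deriv_homog_deriv_differentiable[OF S sm du degree_dir_symbol that])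
      show "(dir_deriv e ^^ k) u differentiable (at z)" if "z \<in> S" for k z
        using funpow_dir_deriv_homog_deriv_differentiable[OF S sm u _ that] by simp
    qed (simp add: F_def)
    then show ?thesis
      using funpow_dir_deriv_homog_deriv[OF S sm du degree_dir_symbol that, where v = e and k = k]
        funpow_dir_deriv_homog_deriv[OF S sm u _ that, where v = e and k = k] by simp
  qed
  note DF = this
  have "(dir_deriv e ^^ k) F x0 = 0"
  proof (rule funpow_dir_deriv_eq_0_on_segment[OF h])
    show "F (x0 + t *\<^sub>R e) = 0" if "t \<in> {0..h}" for t
      using singular add_scaleR_mem_closed_segment[OF h that]
      unfolding gen_singular_line_def F_def by blast
    show "(dir_deriv e ^^ k) F differentiable (at (x0 + t *\<^sub>R e))" if "t \<in> {0..<h}" for k t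
    proof -
      have hd: "(\<lambda>y. homog_deriv (Suc k) (dir_symbol \<nu> * dir_symbol e ^ k) u y
                 + C * homog_deriv k (dir_symbol e ^ k) u y) differentiable_on S"
        using homog_deriv_differentiable_on[OF S sm]
        by (intro differentiable_on_add differentiable_on_mult differentiable_on_const)
      have "(dir_deriv e ^^ k) F differentiable_on S"
        by (rule differentiable_on_cong_open[OF S _ hd]) (rule DF)
      moreover have "x0 + t *\<^sub>R e \<in> S" using add_scaleR_mem_closed_segment[OF h, of t] that seg by auto
      ultimately show ?thesis using S by (simp add: differentiable_on_eq_differentiable_at)
    qed
  qed
  then show ?thesis using DF[OF x0] by simp
qed

lemma alternating_recurrence_closed_form:
  fixes a :: "nat \<Rightarrow> complex"
  assumes rec: "\<And>i. i + 2 \<le> k \<Longrightarrow> a (i + 2) = - a i" and "i \<le> k"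
  shows "a i = (a 0 - \<i> * a 1) / 2 * \<i> ^ i + (a 0 + \<i> * a 1) / 2 * (- \<i>) ^ i"
  using assms(2)
proof (induction i rule: less_induct)
  case (less i)
  consider "i = 0" | "i = 1" | l where "i = l + 2"
    by (metis One_nat_def add_2_eq_Suc' not0_implies_Suc)
  then show ?case
  proof cases
    case 3
    then have "a i = - a l" using rec less.prems by simp
    also have "a l = (a 0 - \<i> * a 1) / 2 * \<i> ^ l + (a 0 + \<i> * a 1) / 2 * (- \<i>) ^ l"
      using less.IH[of l] less.prems 3 by simp
    finally show ?thesis using 3 by (simp add: power_add)
  qed (simp_all add: field_simps)
qed

lemma homog_deriv_eq_eval_at_i:
  assumes a: "\<And>i. i \<le> K \<Longrightarrow> pderiv2 i (K - i) u x = P * \<i> ^ i + Q * (- \<i>) ^ i"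
    and p: "degree p \<le> K"
  shows "homog_deriv K p u x = P * poly p \<i> + Q * poly p (- \<i>)"
proof -
  have poly_eq: "poly p z = (\<Sum>i\<le>K. coeff p i * z ^ i)" for z
    unfolding poly_altdef using p
    by (intro sum.mono_neutral_left) (auto simp: coeff_eq_0)
  have "homog_deriv K p u x = (\<Sum>i\<le>K. coeff p i * (P * \<i> ^ i + Q * (- \<i>) ^ i))"
    unfolding homog_deriv_def using a by (intro sum.cong) auto
  also have "\<dots> = P * poly p \<i> + Q * poly p (- \<i>)"
    unfolding poly_eq by (simp add: sum.distrib sum_distrib_left algebra_simps)
  finally show ?thesis .
qed

lemma norm_rot [simp]: "norm (rot \<theta> v) = norm v"
proof -
  have "(cos \<theta> * a - sin \<theta> * b)\<^sup>2 + (sin \<theta> * a + cos \<theta> * b)\<^sup>2 = a\<^sup>2 + b\<^sup>2" for a b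
    using sin_cos_squared_add[of \<theta>] by algebra
  then show ?thesis by (cases v) (simp add: rot_def norm_Pair)
qed

lemma poly_dir_symbol_rot:
  "poly (dir_symbol (rot \<theta> v)) \<i> = cis (- \<theta>) * poly (dir_symbol v) \<i>"
  "poly (dir_symbol (rot \<theta> v)) (- \<i>) = cis \<theta> * poly (dir_symbol v) (- \<i>)"
  by (simp_all add: dir_symbol_def rot_def complex_eq_iff cis.code algebra_simps)

lemma poly_dir_symbol_nonzero:
  assumes "v \<noteq> 0"
  shows "poly (dir_symbol v) \<i> \<noteq> 0" "poly (dir_symbol v) (- \<i>) \<noteq> 0"
proof -
  obtain a b where v: "v = (a, b)" by fastforce
  then have "a \<noteq> 0 \<or> b \<noteq> 0" using assms by (auto simp: zero_prod_def)
  then show "poly (dir_symbol v) \<i> \<noteq> 0" "poly (dir_symbol v) (- \<i>) \<noteq> 0"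
    unfolding v by (auto simp: dir_symbol_def complex_eq_iff)
qed

lemma poly_dir_symbol_normal:
  assumes f: "norm f = 1" and \<nu>: "norm \<nu> = 1" and orth: "\<nu> \<bullet> f = 0"
  obtains \<sigma> :: real where "\<sigma> \<noteq> 0"
    "poly (dir_symbol \<nu>) \<i> = - \<i> * of_real \<sigma> * poly (dir_symbol f) \<i>"
    "poly (dir_symbol \<nu>) (- \<i>) = \<i> * of_real \<sigma> * poly (dir_symbol f) (- \<i>)"
proof -
  obtain f1 f2 n1 n2 where fn: "f = (f1, f2)" "\<nu> = (n1, n2)" by fastforce
  have hf: "f1\<^sup>2 + f2\<^sup>2 = 1" and hn: "n1\<^sup>2 + n2\<^sup>2 = 1" and o: "n1 * f1 + n2 * f2 = 0"
    using f \<nu> orth unfolding fn by (simp_all add: norm_Pair)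
  define \<sigma> where "\<sigma> = n2 * f1 - n1 * f2"
  have "(n1\<^sup>2 + n2\<^sup>2) * (f1\<^sup>2 + f2\<^sup>2) = (n1 * f1 + n2 * f2)\<^sup>2 + \<sigma>\<^sup>2"
    unfolding \<sigma>_def by algebra
  then have "\<sigma> \<noteq> 0" using hf hn o by auto
  moreover have "n1 = - \<sigma> * f2" "n2 = \<sigma> * f1"
    using hf o unfolding \<sigma>_def by algebra+
  ultimately show ?thesis
    by (intro that[of \<sigma>]) (simp_all add: fn dir_symbol_def complex_eq_iff)
qed

(* At z = \<plusminus>i, rotating a vector by \<theta> multiplies its symbol by cis (\<mp>\<theta>), and a unit normal of
   rot \<theta> e has \<mp>i\<sigma> times the symbol of rot \<theta> e. So for A = P W^k, B = Q W'^k the equations read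
   A + B = 0 and cis (-\<theta>)^k A = cis \<theta>^k B, forcing 2 cos (k \<theta>) B = 0. *)
lemma symbol_system_trivial:
  fixes P Q :: complex
  assumes e: "norm e = 1" and \<nu>: "norm \<nu> = 1" and orth: "\<nu> \<bullet> rot \<theta> e = 0"
    and k: "k \<ge> 1" and cos: "cos (real k * \<theta>) \<noteq> 0"
    and nodal: "P * poly (dir_symbol e ^ k) \<i> + Q * poly (dir_symbol e ^ k) (- \<i>) = 0"
    and singular: "P * poly (dir_symbol \<nu> * dir_symbol (rot \<theta> e) ^ (k - 1)) \<i>
                   + Q * poly (dir_symbol \<nu> * dir_symbol (rot \<theta> e) ^ (k - 1)) (- \<i>) = 0"
  shows "P = 0 \<and> Q = 0"
proof -
  define W where "W = poly (dir_symbol e) \<i>"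
  define W' where "W' = poly (dir_symbol e) (- \<i>)"
  define A where "A = P * W ^ k"
  define B where "B = Q * W' ^ k"
  obtain \<sigma> where \<sigma>: "\<sigma> \<noteq> 0"
    "poly (dir_symbol \<nu>) \<i> = - \<i> * of_real \<sigma> * poly (dir_symbol (rot \<theta> e)) \<i>"
    "poly (dir_symbol \<nu>) (- \<i>) = \<i> * of_real \<sigma> * poly (dir_symbol (rot \<theta> e)) (- \<i>)"
    using poly_dir_symbol_normal[of "rot \<theta> e" \<nu>] e \<nu> orth by auto
  have AB: "A = - B" using nodal unfolding A_def B_def W_def W'_def
    by (simp add: poly_power eq_neg_iff_add_eq_0)
  have "\<i> * of_real \<sigma> * (- (cis (- \<theta>) ^ k * A) + cis \<theta> ^ k * B) = 0"
  proof -
    have "k = Suc (k - 1)" using k by simp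
    then have "(cis (- \<theta>) * W) ^ k = cis (- \<theta>) * W * (cis (- \<theta>) * W) ^ (k - 1)"
      "(cis \<theta> * W') ^ k = cis \<theta> * W' * (cis \<theta> * W') ^ (k - 1)"
      by (metis power_Suc)+
    then show ?thesis
      using singular unfolding A_def B_def W_def W'_def
      by (simp add: poly_power \<sigma> poly_dir_symbol_rot power_mult_distrib algebra_simps)
  qed
  then have "\<i> * of_real \<sigma> * ((cis \<theta> ^ k + cis (- \<theta>) ^ k) * B) = 0"
    unfolding AB by (simp add: algebra_simps)
  then have "(cis \<theta> ^ k + cis (- \<theta>) ^ k) * B = 0" using \<sigma>(1) by simp
  moreover have "cis \<theta> ^ k + cis (- \<theta>) ^ k = 2 * of_real (cos (real k * \<theta>))"
    unfolding Complex.DeMoivre by (simp add: complex_eq_iff cis.code)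
  ultimately have "B = 0" "A = 0" using cos AB by auto
  moreover have "W \<noteq> 0" "W' \<noteq> 0"
    using poly_dir_symbol_nonzero[of e] e unfolding W_def W'_def by (metis norm_zero zero_neq_one)+
  ultimately show ?thesis unfolding A_def B_def by simp
qed

lemma cos_mult_pi_neq_0:
  assumes a0: "0 < \<alpha>" and a1: "\<alpha> < 1" and K: "K < n"
    and not_odd: "\<forall>p q :: int. 1 \<le> p \<and> p \<le> int n - 1 \<and> 0 \<le> q \<and> q \<le> p - 1 \<longrightarrow>
           \<alpha> \<noteq> real_of_int (2 * q + 1) / real_of_int (2 * p)"
  shows "cos (real K * (\<alpha> * pi)) \<noteq> 0"
proof
  assume "cos (real K * (\<alpha> * pi)) = 0"
  then obtain i where i: "odd i" "real K * (\<alpha> * pi) = real_of_int i * (pi / 2)"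
    using cos_zero_iff_int by blast
  obtain q where q: "i = 2 * q + 1" using i(1) by (metis oddE)
  have "real K * \<alpha> * pi = real_of_int i * pi / 2" using i(2) by (simp add: algebra_simps)
  then have "real K * \<alpha> = real_of_int i / 2" by (simp add: field_simps)
  then have \<alpha>: "real_of_int (2 * q + 1) = \<alpha> * (2 * real K)" using q by (simp add: field_simps)
  have "K \<noteq> 0"
  proof
    assume "K = 0"
    then have "2 * q + 1 = 0" using \<alpha> by simp
    then show False by presburger
  qed
  then have "\<alpha> = real_of_int (2 * q + 1) / real_of_int (2 * int K)"
    using \<alpha> by (simp add: field_simps)
  moreover have "real_of_int (2 * q + 1) > 0" using \<alpha> a0 \<open>K \<noteq> 0\<close> by simp
  then have "0 \<le> q" by simp
  moreover have "real_of_int (2 * q + 1) < 2 * real K" using \<alpha> a1 \<open>K \<noteq> 0\<close> by simp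
  then have "q \<le> int K - 1" by linarith
  moreover have "1 \<le> int K" "int K \<le> int n - 1" using \<open>K \<noteq> 0\<close> K by auto
  ultimately show False using not_odd by blast
qed

lemma top_order_pderiv2_eq_0:
  assumes helmholtz: "\<And>i j. pderiv2 (i + 2) j u x0 + pderiv2 i (j + 2) u x0
                              + of_real lam * pderiv2 i j u x0 = 0"
    and low: "\<And>i j. i + j < K \<Longrightarrow> pderiv2 i j u x0 = 0"
    and e: "norm e = 1" and \<nu>: "norm \<nu> = 1" and orth: "\<nu> \<bullet> rot \<theta> e = 0"
    and cos: "cos (real K * \<theta>) \<noteq> 0"
    and nodal: "homog_deriv K (dir_symbol e ^ K) u x0 = 0"
    and singular: "\<And>k. homog_deriv (Suc k) (dir_symbol \<nu> * dir_symbol (rot \<theta> e) ^ k) u x0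
                        + C * homog_deriv k (dir_symbol (rot \<theta> e) ^ k) u x0 = 0"
    and i: "i \<le> K"
  shows "pderiv2 i (K - i) u x0 = 0"
proof (cases "K = 0")
  case True
  then show ?thesis using nodal i by (simp add: homog_deriv_def)
next
  case False
  define a where "a i = pderiv2 i (K - i) u x0" for i
  have rec: "a (i + 2) = - a i" if "i + 2 \<le> K" for i
  proof -
    have "K - (i + 2) + 2 = K - i" using that by simp
    then show ?thesis
      using helmholtz[of i "K - (i + 2)"] low[of i "K - (i + 2)"] that
      by (simp add: a_def eq_neg_iff_add_eq_0)
  qed
  define P Q where "P = (a 0 - \<i> * a 1) / 2" and "Q = (a 0 + \<i> * a 1) / 2"
  have a: "pderiv2 i (K - i) u x0 = P * \<i> ^ i + Q * (- \<i>) ^ i" if "i \<le> K" for i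
    using alternating_recurrence_closed_form[of K a, OF rec that] unfolding P_def Q_def a_def .
  have deg_nodal: "degree (dir_symbol e ^ K) \<le> K"
    using degree_mult_dir_symbol_power[of 1 e K] by simp
  have deg_singular: "degree (dir_symbol \<nu> * dir_symbol (rot \<theta> e) ^ (K - 1)) \<le> K"
    using degree_mult_dir_symbol_power[of "dir_symbol \<nu>" "rot \<theta> e" "K - 1"]
      degree_dir_symbol[of \<nu>] False by linarith
  have "homog_deriv (K - 1) (dir_symbol (rot \<theta> e) ^ (K - 1)) u x0 = 0"
    by (rule homog_deriv_eq_0[of K, OF low]) (use False in simp_all)
  then have "homog_deriv K (dir_symbol \<nu> * dir_symbol (rot \<theta> e) ^ (K - 1)) u x0 = 0"
    using singular[of "K - 1"] False by simp
  then have "P * poly (dir_symbol \<nu> * dir_symbol (rot \<theta> e) ^ (K - 1)) \<i>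
              + Q * poly (dir_symbol \<nu> * dir_symbol (rot \<theta> e) ^ (K - 1)) (- \<i>) = 0"
    by (simp only: homog_deriv_eq_eval_at_i[OF a deg_singular])
  moreover have "P * poly (dir_symbol e ^ K) \<i> + Q * poly (dir_symbol e ^ K) (- \<i>) = 0"
    using nodal by (simp only: homog_deriv_eq_eval_at_i[OF a deg_nodal])
  ultimately have "P = 0 \<and> Q = 0"
    using False by (intro symbol_system_trivial[OF e \<nu> orth _ cos]) auto
  then show ?thesis using a[OF i] by simp
qed

theorem theorem3p5:
  fixes \<Omega> :: "(real \<times> real) set" and u :: "real \<times> real \<Rightarrow> complex"
    and lam h \<alpha> :: real and x0 em ep \<nu> :: "real \<times> real" and C2 :: complex and n :: nat
  assumes "open \<Omega>" and "lam > 0"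
    and smooth: "smooth_on2 \<Omega> u"
    and L2: "(\<lambda>x. (cmod (u x))\<^sup>2) integrable_on \<Omega>"
    and helmholtz: "\<forall>x\<in>\<Omega>. - laplacian u x = complex_of_real lam * u x"
    and "x0 \<in> \<Omega>" and "h > 0" and "0 < \<alpha>" and "\<alpha> < 1"
    and "norm em = 1" and "ep = rot (\<alpha> * pi) em"
    and "closed_segment x0 (x0 + h *\<^sub>R ep) \<subseteq> \<Omega>"
    and "closed_segment x0 (x0 + h *\<^sub>R em) \<subseteq> \<Omega>"
    and "norm \<nu> = 1" and "\<nu> \<bullet> ep = 0"
    and "C2 \<noteq> 0"
    and "gen_singular_line u (closed_segment x0 (x0 + h *\<^sub>R ep)) \<nu> (\<lambda>_. C2)"
    and "nodal_line u (closed_segment x0 (x0 + h *\<^sub>R em))"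
    and "n \<ge> 2"
    and "\<forall>p q :: int. 1 \<le> p \<and> p \<le> int n - 1 \<and> 0 \<le> q \<and> q \<le> p - 1 \<longrightarrow>
           \<alpha> \<noteq> real_of_int (2 * q + 1) / real_of_int (2 * p)"
  shows "vanishes_up_to_order u x0 n"
proof -
  have helm: "pderiv2 (i + 2) j u x0 + pderiv2 i (j + 2) u x0 + of_real lam * pderiv2 i j u x0 = 0"
    for i j by (rule helmholtz_pderiv2[OF assms(1) smooth helmholtz assms(6)])
  have nodal: "homog_deriv k (dir_symbol em ^ k) u x0 = 0" for k
    by (rule nodal_line_homog_derivs[OF assms(1) smooth assms(7,13,18)])
  have singular: "homog_deriv (Suc k) (dir_symbol \<nu> * dir_symbol (rot (\<alpha> * pi) em) ^ k) u x0
                    + C2 * homog_deriv k (dir_symbol (rot (\<alpha> * pi) em) ^ k) u x0 = 0" for k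
    using singular_line_homog_derivs[OF assms(1) smooth assms(7,12,17)] assms(11) by simp
  have "pderiv2 i j u x0 = 0" if "i + j < n" for i j
    using that
  proof (induction "i + j" arbitrary: i j rule: less_induct)
    case less
    have "pderiv2 i (i + j - i) u x0 = 0"
      using less assms(10,14,15) assms(11)
      by (intro top_order_pderiv2_eq_0[OF helm _ _ _ _ _ nodal singular]
          cos_mult_pi_neq_0[OF assms(8,9) _ assms(20)]) auto
    then show ?case by simp
  qed
  then show ?thesis unfolding vanishes_up_to_order_def by blast
qed

end
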